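(* Let $m>2$ be an integer with prime factorization $m=p_1^{\alpha_1}\cdots p_r^{\alpha_r}$ ($p_1,\ldots,p_r$ distinct primes, $\alpha_i\ge1$), and let $p$ be an odd prime not dividing $m$. Then $$(-1)^{\frac{\varphi(m)}2\cdot\frac{p-1}2}\Big(\frac{p_1}p\Big)^{[r=1]}\prod_{\substack{0<k<m/2\\ \gcd(k,m)=1}}\binom{p-1}{\lfloor pk/m\rfloor}\equiv 1+\frac{\varphi(m)}2\sum_{i=1}^r(\alpha_ip_i-\alpha_i+1)\frac{p_i^{p-1}-1}{p_i-1}\pmod{p^2}.$$
   Context: $\varphi$ is Euler's totient function, $(\frac{\cdot}{p})$ is the Legendre symbol, $\lfloor x\rfloor$ is the integer part of $x$, and for an assertion $P$, $[P]=1$ if $P$ holds and $[P]=0$ otherwise. Congruences modulo $p^2$ are between rational numbers whose denominators are prime to $p$. *)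

theory Defs
  imports "HOL-Number_Theory.Number_Theory"
begin

end

(*
  Write j(k) = floor (p k / m) for the k in (0, m/2) prime to m. Modulo p^2 one has
  binom (p - 1) j = (-1)^j (1 - p H(j)), with H(j) the j-th harmonic number computed
  modulo p, so the product equals (-1)^J (1 - p S) with J = sum of the j(k) and
  S = sum of the H(j(k)).

  The sign: inclusion-exclusion over the squarefree divisors d of m turns J into
  Eisenstein's lattice point sums E(n) = sum_{i <= (p-1)/2} floor (i n / p) for the
  cofactors n = m/d. By Gauss' lemma (-1)^E(n) is a Legendre symbol (up to (2/p) for
  even n), and the cofactors pair off as n, n/q for one odd prime factor q (or
  n, n/2 when m is a power of 2); the pairs give (q/p), so the product is (p_1/p)
  when r = 1 and 1 otherwise.

  The magnitude: H(p - 1 - j) = H(j) mod p folds the sum over all k < m prime to m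
  onto 2 S, and the same inclusion-exclusion reduces it to sums over 0 < k < n of
  H(floor (p k / n)), which by counting lattice points and Lerch's formula are
  -n (n^(p-1) - 1) / p mod p. As n |-> n^(p-1) - 1 is additive modulo p^2 on
  units, the alternating sum over cofactors collapses to the right-hand side.
*)
theory Submission
  imports Defs
begin

lemma cong_mult_self_square:
  fixes p a b :: int
  assumes "[a = b] (mod p)"
  shows "[p * a = p * b] (mod p\<^sup>2)"
proof -
  obtain k where "a - b = p * k"
    using assms by (auto simp: cong_iff_dvd_diff elim: dvdE)
  then have "p * a - p * b = p\<^sup>2 * k"
    by (simp add: algebra_simps power2_eq_square)
  then show ?thesis
    by (simp add: cong_iff_dvd_diff)
qed

lemma prod_one_plus_mult_cong:
  fixes p :: int
  assumes "finite A"
  shows "[(\<Prod>x\<in>A. 1 + p * f x) = 1 + p * (\<Sum>x\<in>A. f x)] (mod p\<^sup>2)"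
  using assms
proof (induction A rule: finite_induct)
  case empty
  then show ?case by simp
next
  case (insert a A)
  let ?s = "\<Sum>x\<in>A. f x"
  have "[(\<Prod>x\<in>insert a A. 1 + p * f x) = (1 + p * f a) * (1 + p * ?s)] (mod p\<^sup>2)"
    using insert by (simp add: cong_scalar_left)
  also have "(1 + p * f a) * (1 + p * ?s) = 1 + p * (f a + ?s) + p\<^sup>2 * (f a * ?s)"
    by (simp add: algebra_simps power2_eq_square)
  also have "[\<dots> = 1 + p * (f a + ?s)] (mod p\<^sup>2)"
    by (simp add: cong_iff_dvd_diff)
  finally show ?case
    using insert by simp
qed

lemma minus_one_power_eq: "(even a \<longleftrightarrow> even b) \<Longrightarrow> (-1::'a::ring_1) ^ a = (-1) ^ b"
  by (simp add: minus_one_power_iff)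

lemma Legendre_cong:
  fixes a b p :: int
  assumes "[a = b] (mod p)"
  shows "Legendre a p = Legendre b p"
proof -
  have "QuadRes p a \<longleftrightarrow> QuadRes p b"
    using assms unfolding QuadRes_def by (meson cong_sym cong_trans)
  moreover have "[a = 0] (mod p) \<longleftrightarrow> [b = 0] (mod p)"
    using assms by (meson cong_sym cong_trans)
  ultimately show ?thesis
    by (simp add: Legendre_def)
qed

lemma Legendre_mult_self:
  fixes a p :: int
  assumes "\<not> p dvd a"
  shows "Legendre a p * Legendre a p = 1"
  using assms by (simp add: Legendre_def cong_0_iff)

lemma pm1_cong_eq:
  fixes a b p :: int
  assumes "p > 2" "a = 1 \<or> a = -1" "b = 1 \<or> b = -1" "[a = b] (mod p)"
  shows "a = b"
proof (rule ccontr)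
  assume "a \<noteq> b"
  then have "a - b = 2 \<or> a - b = -2"
    using assms(2,3) by auto
  then have "p dvd 2"
    using assms(4) by (auto simp: cong_iff_dvd_diff)
  then show False
    using zdvd_imp_le[of p 2] assms(1) by simp
qed

lemma Legendre_mult:
  fixes a b :: int and p :: nat
  assumes "prime p" "p > 2"
  shows "Legendre (a * b) p = Legendre a p * Legendre b p"
proof (cases "int p dvd a \<or> int p dvd b")
  case True
  then show ?thesis
    by (auto simp: Legendre_def cong_0_iff)
next
  case False
  then have "\<not> int p dvd a * b"
    using assms(1) by (simp add: prime_dvd_mult_iff)
  have "[Legendre (a * b) p = a ^ ((p - 1) div 2) * b ^ ((p - 1) div 2)] (mod p)"
    using euler_criterion[OF assms, of "a * b"] by (simp add: power_mult_distrib)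
  moreover have "[a ^ ((p - 1) div 2) * b ^ ((p - 1) div 2) = Legendre a p * Legendre b p] (mod p)"
    by (intro cong_mult cong_sym[OF euler_criterion[OF assms]])
  ultimately have "[Legendre (a * b) p = Legendre a p * Legendre b p] (mod p)"
    by (rule cong_trans)
  then show ?thesis
    using False \<open>\<not> int p dvd a * b\<close> assms(2) by (intro pm1_cong_eq) (simp_all add: Legendre_def cong_0_iff)
qed

context GAUSS
begin

lemma card_E_eq: "card E = card {i \<in> A. (int p - 1) div 2 < i * a mod p}"
proof -
  have "inj_on (\<lambda>i. i * a mod p) A"
    using comp_inj_on[OF inj_on_xa_A SR_B_inj[unfolded B_def]] by (simp add: comp_def)
  moreover have "E = (\<lambda>i. i * a mod p) ` {i \<in> A. (int p - 1) div 2 < i * a mod p}"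
    unfolding E_def C_def B_def by auto
  ultimately show ?thesis
    by (simp add: card_image inj_on_subset)
qed

end

section \<open>Inclusion-exclusion over prime divisors\<close>

lemma sum_Pow_insert:
  assumes "finite A" "a \<notin> A"
  shows "(\<Sum>D\<in>Pow (insert a A). f D) = (\<Sum>D\<in>Pow A. f D + f (insert a D))"
proof -
  have "inj_on (insert a) (Pow A)"
    using assms(2) by (auto intro!: inj_onI simp: insert_ident)
  then have "(\<Sum>D\<in>insert a ` Pow A. f D) = (\<Sum>D\<in>Pow A. f (insert a D))"
    by (simp add: sum.reindex)
  moreover have "Pow A \<inter> insert a ` Pow A = {}"
    using assms(2) by blast
  ultimately show ?thesis
    unfolding Pow_insert using assms(1) by (simp add: sum.union_disjoint sum.distrib)
qed

lemma prod_Pow_insert: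
  assumes "finite A" "a \<notin> A"
  shows "(\<Prod>D\<in>Pow (insert a A). f D) = (\<Prod>D\<in>Pow A. f D * f (insert a D))"
proof -
  have "inj_on (insert a) (Pow A)"
    using assms(2) by (auto intro!: inj_onI simp: insert_ident)
  then have "(\<Prod>D\<in>insert a ` Pow A. f D) = (\<Prod>D\<in>Pow A. f (insert a D))"
    by (simp add: prod.reindex)
  moreover have "Pow A \<inter> insert a ` Pow A = {}"
    using assms(2) by blast
  ultimately show ?thesis
    unfolding Pow_insert using assms(1) by (simp add: prod.union_disjoint prod.distrib)
qed

lemma card_insert_Pow:
  assumes "finite A" "a \<notin> A" "D \<in> Pow A"
  shows "card (insert a D) = Suc (card D)"
proof -
  have "D \<subseteq> A"
    using assms(3) by simp
  then have "finite D" "a \<notin> D"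
    using assms(1,2) finite_subset by auto
  then show ?thesis
    by simp
qed

lemma sum_Pow_minus_one_power:
  assumes "finite A" "A \<noteq> {}"
  shows "(\<Sum>D\<in>Pow A. (-1::'a::comm_ring_1) ^ card D) = 0"
proof -
  obtain a where "a \<in> A"
    using assms(2) by blast
  define B where "B = A - {a}"
  have A: "A = insert a B" "a \<notin> B"
    using \<open>a \<in> A\<close> by (auto simp: B_def)
  have "finite B"
    using A assms(1) by simp
  then show ?thesis
    unfolding A(1) sum_Pow_insert[OF \<open>finite B\<close> A(2)]
    by (intro sum.neutral) (simp add: card_insert_Pow[OF \<open>finite B\<close> A(2)])
qed

definition sieved :: "nat \<Rightarrow> nat set \<Rightarrow> nat \<Rightarrow> nat set" where
  "sieved c P n = {k. 0 < k \<and> c * k < n \<and> (\<forall>q\<in>P. \<not> q dvd k)}"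

lemma finite_sieved:
  assumes "c > 0"
  shows "finite (sieved c P n)"
proof (rule finite_subset)
  show "sieved c P n \<subseteq> {..<n}"
  proof
    fix k
    assume "k \<in> sieved c P n"
    then have "c * k < n"
      by (simp add: sieved_def)
    moreover have "k \<le> c * k"
      using assms by simp
    ultimately show "k \<in> {..<n}"
      unfolding lessThan_iff by linarith
  qed
qed simp

lemma sieved_insert:
  assumes "prime q" "q \<notin> P" "q dvd n" "\<forall>q'\<in>P. prime q'"
  shows "sieved c (insert q P) n = sieved c P n - (*) q ` sieved c P (n div q)"
    and "(*) q ` sieved c P (n div q) \<subseteq> sieved c P n"
proof -
  obtain n' where n: "n = q * n'"
    using assms(3) by blast
  have "q > 0"
    using assms(1) prime_gt_0_nat by blast
  then have n': "n div q = n'"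
    using n by simp
  have P_dvd_mult: "(\<forall>q'\<in>P. \<not> q' dvd q * k) \<longleftrightarrow> (\<forall>q'\<in>P. \<not> q' dvd k)" for k
    using assms by (metis prime_dvd_mult_iff primes_dvd_imp_eq)
  show "(*) q ` sieved c P (n div q) \<subseteq> sieved c P n"
    unfolding n' using \<open>q > 0\<close> P_dvd_mult by (auto simp: sieved_def n)
  show "sieved c (insert q P) n = sieved c P n - (*) q ` sieved c P (n div q)"
  proof (intro equalityI subsetI)
    fix k
    assume k: "k \<in> sieved c P n - (*) q ` sieved c P (n div q)"
    have "\<not> q dvd k"
    proof
      assume "q dvd k"
      then obtain k' where "k = q * k'" ..
      then have "k' \<in> sieved c P (n div q)"
        using k \<open>q > 0\<close> P_dvd_mult unfolding n' by (auto simp: sieved_def n)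
      then show False
        using k \<open>k = q * k'\<close> by blast
    qed
    then show "k \<in> sieved c (insert q P) n"
      using k by (simp add: sieved_def)
  qed (auto simp: sieved_def)
qed

lemma sum_sieved_insert:
  fixes F :: "nat \<Rightarrow> nat \<Rightarrow> 'a::comm_ring_1"
  assumes "c > 0" "prime q" "q \<notin> P" "q dvd n" "\<forall>q'\<in>P. prime q'"
    and scale_invariant: "\<And>q k n. q > 0 \<Longrightarrow> F (q * k) (q * n) = F k n"
  shows "(\<Sum>k\<in>sieved c (insert q P) n. F k n)
       = (\<Sum>k\<in>sieved c P n. F k n) - (\<Sum>k\<in>sieved c P (n div q). F k (n div q))"
proof -
  have "q > 0"
    using assms(2) prime_gt_0_nat by blast
  have "(\<Sum>k\<in>(*) q ` sieved c P (n div q). F k n) = (\<Sum>k\<in>sieved c P (n div q). F (q * k) n)"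
    using \<open>q > 0\<close> by (simp add: sum.reindex inj_on_def)
  also have "\<dots> = (\<Sum>k\<in>sieved c P (n div q). F k (n div q))"
    using scale_invariant[OF \<open>q > 0\<close>, of _ "n div q"] assms(4) by simp
  finally show ?thesis
    using sieved_insert[OF assms(2-5)] finite_sieved[OF assms(1)] by (simp add: sum_diff)
qed

lemma sum_sieved_inclusion_exclusion:
  fixes F :: "nat \<Rightarrow> nat \<Rightarrow> 'a::comm_ring_1"
  assumes "c > 0" "finite P" "\<forall>q\<in>P. prime q" "\<forall>q\<in>P. q dvd n"
    and scale_invariant: "\<And>q k n. q > 0 \<Longrightarrow> F (q * k) (q * n) = F k n"
  shows "(\<Sum>k\<in>sieved c P n. F k n)
       = (\<Sum>D\<in>Pow P. (-1) ^ card D * (\<Sum>k\<in>sieved c {} (n div \<Prod>D). F k (n div \<Prod>D)))"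
  using assms(2-4)
proof (induction P arbitrary: n rule: finite_induct)
  case empty
  then show ?case by simp
next
  case (insert q P)
  have q: "prime q" "q dvd n"
    using insert.prems by auto
  have "\<forall>q'\<in>P. q' dvd n div q"
    using insert q by (metis dvd_div_iff_mult insert_iff prime_dvd_mult_iff primes_dvd_imp_eq dvd_mult_div_cancel)
  then have IH_div: "(\<Sum>k\<in>sieved c P (n div q). F k (n div q))
      = (\<Sum>D\<in>Pow P. (-1) ^ card D * (\<Sum>k\<in>sieved c {} (n div q div \<Prod>D). F k (n div q div \<Prod>D)))"
    using insert by simp
  have insert_term: "(-1) ^ card (insert q D) * (\<Sum>k\<in>sieved c {} (n div \<Prod>(insert q D)). F k (n div \<Prod>(insert q D)))
      = - ((-1) ^ card D * (\<Sum>k\<in>sieved c {} (n div q div \<Prod>D). F k (n div q div \<Prod>D)))"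
    if "D \<in> Pow P" for D
  proof -
    have "finite D" "q \<notin> D"
      using that insert(1,2) finite_subset by auto
    then show ?thesis
      by (simp add: div_mult2_eq)
  qed
  have "(\<Sum>k\<in>sieved c (insert q P) n. F k n)
      = (\<Sum>k\<in>sieved c P n. F k n) - (\<Sum>k\<in>sieved c P (n div q). F k (n div q))"
    using insert.prems by (intro sum_sieved_insert assms(1) q insert(2) scale_invariant) auto
  then show ?case
    using insert by (simp add: sum_Pow_insert insert_term IH_div sum_subtractf)
qed

text \<open>Counting the lattice points below the line y = p x / n in two ways.\<close>

lemma sum_prefix_sums_swap:
  fixes g :: "nat \<Rightarrow> 'a::comm_ring_1"
  assumes "finite A" "\<forall>k\<in>A. f k \<le> N"
  shows "(\<Sum>k\<in>A. \<Sum>i = 1..f k. g i) = (\<Sum>i = 1..N. g i * of_nat (card {k\<in>A. i \<le> f k}))"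
proof -
  have "(\<Sum>k\<in>A. \<Sum>i = 1..f k. g i) = (\<Sum>k\<in>A. \<Sum>i = 1..N. if i \<le> f k then g i else 0)"
  proof (rule sum.cong)
    fix k
    assume "k \<in> A"
    then have "{i \<in> {1..N}. i \<le> f k} = {1..f k}"
      using assms(2) by auto
    then show "(\<Sum>i = 1..f k. g i) = (\<Sum>i = 1..N. if i \<le> f k then g i else 0)"
      by (simp add: sum.inter_filter[symmetric])
  qed simp
  also have "\<dots> = (\<Sum>i = 1..N. \<Sum>k\<in>A. if i \<le> f k then g i else 0)"
    by (rule sum.swap)
  also have "\<dots> = (\<Sum>i = 1..N. g i * of_nat (card {k\<in>A. i \<le> f k}))"
    using assms(1) by (simp add: sum.inter_filter[symmetric] mult.commute)
  finally show ?thesis .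
qed

lemma card_sieved_floor_ge:
  fixes p n c i :: nat
  assumes "p > 0" "c > 0" "n > 0" "\<not> p dvd i * n" "c * (i * n div p) < n"
  shows "card (sieved c {} n) = card {k\<in>sieved c {} n. i \<le> p * k div n} + i * n div p"
proof -
  have below: "{k\<in>sieved c {} n. \<not> i \<le> p * k div n} = {1..i * n div p}"
  proof (rule Set.set_eqI, rule iffI)
    fix k
    assume "k \<in> {k\<in>sieved c {} n. \<not> i \<le> p * k div n}"
    then have "0 < k" "p * k < i * n"
      using assms(3) by (auto simp: sieved_def not_le div_less_iff_less_mult mult.commute)
    then show "k \<in> {1..i * n div p}"
      using assms(1) by (simp add: less_eq_div_iff_mult_less_eq mult.commute)
  next
    fix k
    assume k: "k \<in> {1..i * n div p}"
    then have "c * k < n"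
      using assms(5) by (meson atLeastAtMost_iff le_less_trans mult_le_mono2)
    moreover have "p * k < i * n"
      using k assms(1,4)
      by (metis atLeastAtMost_iff dvd_triv_left less_eq_div_iff_mult_less_eq le_neq_implies_less mult.commute)
    then have "\<not> i \<le> p * k div n"
      using assms(3) by (simp add: not_le div_less_iff_less_mult)
    ultimately show "k \<in> {k\<in>sieved c {} n. \<not> i \<le> p * k div n}"
      using k by (simp add: sieved_def)
  qed
  have "card (sieved c {} n) = card {k\<in>sieved c {} n. i \<le> p * k div n} + card {k\<in>sieved c {} n. \<not> i \<le> p * k div n}"
    using finite_sieved[OF assms(2)] by (subst card_Un_disjoint[symmetric]) (auto intro: arg_cong[where f = card])
  then show ?thesis
    unfolding below by simp
qed

lemma sum_sieved_floor_swap: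
  fixes p n c N :: nat and g :: "nat \<Rightarrow> 'a::comm_ring_1"
  assumes "p > 0" "c > 0" "n > 0" "\<forall>k\<in>sieved c {} n. p * k div n \<le> N"
    and "\<forall>i\<in>{1..N}. \<not> p dvd i * n \<and> c * (i * n div p) < n"
  shows "(\<Sum>k\<in>sieved c {} n. \<Sum>i = 1..p * k div n. g i)
       = (\<Sum>i = 1..N. g i * (of_nat (card (sieved c {} n)) - of_nat (i * n div p)))"
proof -
  have "(\<Sum>k\<in>sieved c {} n. \<Sum>i = 1..p * k div n. g i)
      = (\<Sum>i = 1..N. g i * of_nat (card {k\<in>sieved c {} n. i \<le> p * k div n}))"
    by (rule sum_prefix_sums_swap[OF finite_sieved[OF assms(2)] assms(4)])
  also have "\<dots> = (\<Sum>i = 1..N. g i * (of_nat (card (sieved c {} n)) - of_nat (i * n div p)))"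
  proof (rule sum.cong)
    fix i
    assume "i \<in> {1..N}"
    then have "card (sieved c {} n) = card {k\<in>sieved c {} n. i \<le> p * k div n} + i * n div p"
      using assms by (intro card_sieved_floor_ge) auto
    then show "g i * of_nat (card {k\<in>sieved c {} n. i \<le> p * k div n})
        = g i * (of_nat (card (sieved c {} n)) - of_nat (i * n div p))"
      by (simp add: algebra_simps)
  qed simp
  finally show ?thesis .
qed

lemma prod_dvd_of_subset_prime_factors:
  fixes m :: nat
  assumes "m \<noteq> 0" "D \<subseteq> prime_factors m"
  shows "\<Prod>D dvd m"
proof -
  have "q dvd q ^ multiplicity q m" if "q \<in> D" for q
    using that assms(2) by (intro dvd_power) (auto simp: prime_factors_multiplicity)
  then have "\<Prod>D dvd (\<Prod>q\<in>D. q ^ multiplicity q m)"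
    by (simp add: prod_dvd_prod)
  also have "\<dots> dvd (\<Prod>q\<in>prime_factors m. q ^ multiplicity q m)"
    using assms(2) by (intro prod_dvd_prod_subset) simp_all
  also have "\<dots> = m"
    using assms(1) prime_factorization_nat by simp
  finally show ?thesis .
qed

definition cofactor :: "nat \<Rightarrow> nat set \<Rightarrow> nat" where
  "cofactor m D = m div \<Prod>D"

lemma cofactor_mult:
  "m \<noteq> 0 \<Longrightarrow> D \<subseteq> prime_factors m \<Longrightarrow> cofactor m D * \<Prod>D = m"
  unfolding cofactor_def using prod_dvd_of_subset_prime_factors by simp

lemma cofactor_pos:
  "m \<noteq> 0 \<Longrightarrow> D \<subseteq> prime_factors m \<Longrightarrow> cofactor m D > 0"
  using cofactor_mult by (metis gr0I mult_0)

lemma cofactor_dvd: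
  "m \<noteq> 0 \<Longrightarrow> D \<subseteq> prime_factors m \<Longrightarrow> cofactor m D dvd m"
  using cofactor_mult by (metis dvd_triv_left)

lemma cofactor_insert:
  assumes "m \<noteq> 0" "q \<in> prime_factors m" "D \<subseteq> prime_factors m - {q}"
  shows "q * cofactor m (insert q D) = cofactor m D"
proof -
  have D: "D \<subseteq> prime_factors m" "insert q D \<subseteq> prime_factors m"
    using assms(2,3) by auto
  have "finite D" "q \<notin> D"
    using assms(3) finite_subset by auto
  then have "(q * cofactor m (insert q D)) * \<Prod>D = cofactor m D * \<Prod>D"
    using cofactor_mult[OF assms(1) D(1)] cofactor_mult[OF assms(1) D(2)] by (simp add: ac_simps)
  moreover have "\<Prod>D > 0"
    using assms(3) by (intro prod_pos) (auto intro: prime_gt_0_nat)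
  ultimately show ?thesis
    by simp
qed

lemma coprime_iff_prime_factors_not_dvd:
  fixes k m :: nat
  assumes "m \<noteq> 0"
  shows "coprime k m \<longleftrightarrow> (\<forall>q\<in>prime_factors m. \<not> q dvd k)"
proof
  assume "coprime k m"
  show "\<forall>q\<in>prime_factors m. \<not> q dvd k"
  proof (intro ballI notI)
    fix q
    assume "q \<in> prime_factors m" "q dvd k"
    then have "q = 1"
      using coprime_common_divisor_nat[OF \<open>coprime k m\<close>] in_prime_factors_imp_dvd by blast
    then show False
      using \<open>q \<in> prime_factors m\<close> by (metis in_prime_factors_imp_prime not_prime_1)
  qed
next
  assume no_common: "\<forall>q\<in>prime_factors m. \<not> q dvd k"
  show "coprime k m"
  proof (rule ccontr)
    assume "\<not> coprime k m"
    then have "gcd k m \<noteq> 1"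
      using coprime_iff_gcd_eq_1 by blast
    then obtain q where q: "prime q" "q dvd gcd k m"
      using prime_factor_nat by blast
    then have "q dvd k" "q \<in> prime_factors m"
      using assms by (auto simp: in_prime_factors_iff)
    then show False
      using no_common by blast
  qed
qed

lemma sieved_prime_factors:
  "m \<noteq> 0 \<Longrightarrow> sieved c (prime_factors m) m = {k. 0 < k \<and> c * k < m \<and> coprime k m}"
  by (auto simp: sieved_def coprime_iff_prime_factors_not_dvd)

lemma sum_coprime_inclusion_exclusion:
  fixes F :: "nat \<Rightarrow> nat \<Rightarrow> 'a::comm_ring_1"
  assumes "c > 0" "m \<noteq> 0"
    and "\<And>q k n. q > 0 \<Longrightarrow> F (q * k) (q * n) = F k n"
  shows "(\<Sum>k | 0 < k \<and> c * k < m \<and> coprime k m. F k m)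
       = (\<Sum>D\<in>Pow (prime_factors m). (-1) ^ card D * (\<Sum>k\<in>sieved c {} (cofactor m D). F k (cofactor m D)))"
  unfolding sieved_prime_factors[OF assms(2), symmetric] cofactor_def
  using assms by (intro sum_sieved_inclusion_exclusion) auto

lemma totient_alternating_sum:
  fixes m :: nat
  assumes "m > 1"
  shows "int (totient m) = (\<Sum>D\<in>Pow (prime_factors m). (-1) ^ card D * int (cofactor m D))"
proof -
  have "{k. 0 < k \<and> 1 * k < m \<and> coprime k m} = totatives m"
    using totatives_less[of _ m] assms by (auto simp: in_totatives_iff)
  then have "int (totient m) = (\<Sum>k | 0 < k \<and> 1 * k < m \<and> coprime k m. 1::int)"
    by (simp add: totient_def)
  also have "\<dots> = (\<Sum>D\<in>Pow (prime_factors m). (-1) ^ card D * (int (cofactor m D) - 1))"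
  proof -
    have "sieved 1 {} n = {0<..<n}" for n
      by (auto simp: sieved_def)
    then have "card (sieved 1 {} n) = n - 1" for n
      by simp
    then show ?thesis
      using assms by (subst sum_coprime_inclusion_exclusion)
        (auto intro!: sum.cong simp: Suc_le_eq cofactor_pos)
  qed
  also have "\<dots> = (\<Sum>D\<in>Pow (prime_factors m). (-1) ^ card D * int (cofactor m D))"
    using sum_Pow_minus_one_power[of "prime_factors m"] assms
    by (simp add: right_diff_distrib sum_subtractf prime_factorization_empty_iff)
  finally show ?thesis .
qed

lemma sum_Pow_prime_factors_split:
  fixes w :: "bool \<Rightarrow> int"
  assumes "m \<noteq> 0" "q \<in> prime_factors m"
  shows "(\<Sum>D\<in>Pow (prime_factors m). (-1) ^ card D * int (cofactor m D) * w (q \<in> D))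
       = (int q * w False - w True)
         * (\<Sum>D\<in>Pow (prime_factors m - {q}). (-1) ^ card D * int (cofactor m (insert q D)))"
proof -
  let ?P = "prime_factors m - {q}"
  define F where "F D = (-1) ^ card D * int (cofactor m D) * w (q \<in> D)" for D
  have P: "prime_factors m = insert q ?P" "finite ?P" "q \<notin> ?P"
    using assms(2) by auto
  have F_pair: "F D + F (insert q D) = (int q * w False - w True) * ((-1) ^ card D * int (cofactor m (insert q D)))"
    if "D \<in> Pow ?P" for D
  proof -
    have "int (cofactor m D) = int q * int (cofactor m (insert q D))"
      using cofactor_insert[OF assms] that by (simp flip: of_nat_mult)
    moreover have "card (insert q D) = Suc (card D)" "q \<notin> D"
      using card_insert_Pow[OF P(2,3) that] that by auto
    ultimately show ?thesis
      by (simp add: F_def algebra_simps)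
  qed
  have "(\<Sum>D\<in>Pow (prime_factors m). F D) = (\<Sum>D\<in>Pow ?P. F D + F (insert q D))"
    by (subst P(1)) (rule sum_Pow_insert[OF P(2,3)])
  also have "\<dots> = (int q * w False - w True) * (\<Sum>D\<in>Pow ?P. (-1) ^ card D * int (cofactor m (insert q D)))"
    by (simp add: F_pair sum_distrib_left)
  finally show ?thesis
    by (simp add: F_def)
qed

lemma totient_multiplicity_sum:
  fixes m q :: nat
  defines "a \<equiv> int (multiplicity q m)"
  assumes "m > 1" "q \<in> prime_factors m"
  shows "(int q - 1) * (\<Sum>D\<in>Pow (prime_factors m). (-1) ^ card D * int (cofactor m D) * (a - (if q \<in> D then 1 else 0)))
       = (a * int q - a + 1) * int (totient m)"
proof -
  define X where "X = (\<Sum>D\<in>Pow (prime_factors m - {q}). (-1) ^ card D * int (cofactor m (insert q D)))"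
  have "int (totient m) = (int q - 1) * X"
    using totient_alternating_sum[OF assms(2)] sum_Pow_prime_factors_split[OF _ assms(3), of "\<lambda>_. 1"] assms(2)
    by (simp add: X_def)
  moreover have "(\<Sum>D\<in>Pow (prime_factors m). (-1) ^ card D * int (cofactor m D) * (a - (if q \<in> D then 1 else 0)))
      = (a * int q - a + 1) * X"
    using sum_Pow_prime_factors_split[OF _ assms(3), of "\<lambda>b. a - (if b then 1 else 0)"] assms(2)
    by (simp add: X_def algebra_simps)
  ultimately show ?thesis
    by simp
qed

lemma sum_coprime_fold_half:
  fixes m :: nat
  assumes "m > 2"
  shows "(\<Sum>k | 0 < k \<and> k < m \<and> coprime k m. f k)
       = (\<Sum>k | 0 < k \<and> 2 * k < m \<and> coprime k m. f k + f (m - k))"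
proof -
  define S where "S = {k. 0 < k \<and> 2 * k < m \<and> coprime k m}"
  have coprime_diff: "coprime (m - k) m \<longleftrightarrow> coprime k m" if "k \<le> m" for k
    using that by (metis coprime_iff_gcd_eq_1 gcd_diff2_nat)
  have not_half: "2 * k \<noteq> m" if "0 < k" "coprime k m" for k
  proof
    assume "2 * k = m"
    then have "k dvd gcd k m"
      by (metis dvd_triv_right gcd_greatest dvd_refl)
    moreover have "gcd k m = 1"
      using that(2) coprime_iff_gcd_eq_1 by blast
    ultimately show False
      using assms \<open>2 * k = m\<close> by simp
  qed
  have split: "{k. 0 < k \<and> k < m \<and> coprime k m} = S \<union> (\<lambda>k. m - k) ` S"
  proof (rule Set.set_eqI, rule iffI)
    fix k
    assume k: "k \<in> {k. 0 < k \<and> k < m \<and> coprime k m}"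
    show "k \<in> S \<union> (\<lambda>k. m - k) ` S"
    proof (cases "2 * k < m")
      case False
      then have "m - k \<in> S" "k = m - (m - k)"
        using k not_half[of k] coprime_diff[of k] by (auto simp: S_def)
      then show ?thesis
        by blast
    qed (use k in \<open>simp add: S_def\<close>)
  next
    fix k
    assume "k \<in> S \<union> (\<lambda>k. m - k) ` S"
    then show "k \<in> {k. 0 < k \<and> k < m \<and> coprime k m}"
      using coprime_diff by (auto simp: S_def)
  qed
  have "S \<inter> (\<lambda>k. m - k) ` S = {}" "inj_on (\<lambda>k. m - k) S"
    by (auto simp: S_def inj_on_def)
  moreover have "finite S"
    by (rule finite_subset[of _ "{..<m}"]) (auto simp: S_def)
  ultimately show ?thesis
    unfolding split by (simp add: sum.union_disjoint sum.reindex sum.distrib S_def)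
qed

lemma card_coprime_below_half:
  fixes m :: nat
  assumes "m > 2"
  shows "card {k. 0 < k \<and> 2 * k < m \<and> coprime k m} = totient m div 2"
proof -
  have "{k. 0 < k \<and> k < m \<and> coprime k m} = totatives m"
    using totatives_less[of _ m] assms by (auto simp: in_totatives_iff)
  then have "totient m = (\<Sum>k | 0 < k \<and> 2 * k < m \<and> coprime k m. 1 + 1)"
    using sum_coprime_fold_half[OF assms, of "\<lambda>_. 1::nat"] by (simp add: totient_def)
  then show ?thesis
    by simp
qed

lemma floor_mult_complement:
  fixes p k m :: nat
  assumes "k < m" "\<not> m dvd p * k"
  shows "p * (m - k) div m = p - 1 - p * k div m"
proof -
  define j r where "j = p * k div m" and "r = p * k mod m"
  have pk: "p * k = m * j + r" and r: "0 < r" "r < m"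
    using assms by (auto simp: j_def r_def mod_greater_zero_iff_not_dvd)
  have "p > 0"
    using assms(2) by (intro gr0I) simp
  then have "p * k < p * m"
    using assms(1) by simp
  then have "m * j + r < m * p"
    using pk by (metis mult.commute)
  then have "m * j < m * p"
    by linarith
  then have "j < p"
    by (simp add: mult_less_cancel1)
  have "int p * int k = int m * int j + int r"
    using pk by (metis of_nat_add of_nat_mult)
  moreover have "int (p * (m - k)) = int p * int m - int p * int k"
    using assms(1) by (simp add: of_nat_diff right_diff_distrib)
  moreover have "int (m * (p - 1 - j) + (m - r)) = int m * (int p - 1 - int j) + (int m - int r)"
    using \<open>j < p\<close> r by (simp add: of_nat_diff)
  ultimately have "int (p * (m - k)) = int (m * (p - 1 - j) + (m - r))"
    by (simp add: algebra_simps)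
  then have "p * (m - k) = m * (p - 1 - j) + (m - r)"
    by (simp only: of_nat_eq_iff)
  then show ?thesis
    unfolding j_def[symmetric] using r by (simp add: div_nat_eqI)
qed

lemma prime_factors_eq_two:
  fixes m :: nat
  assumes "m > 2" "\<forall>q\<in>prime_factors m. even q"
  shows "prime_factors m = {2}" and "even m" and "even (m div 2)"
proof -
  have two: "q = 2" if "q \<in> prime_factors m" for q
    using that assms(2) prime_odd_nat[of q] prime_ge_2_nat[of q] by force
  moreover have "prime_factors m \<noteq> {}"
    using assms(1) by (simp add: prime_factorization_empty_iff)
  ultimately show P: "prime_factors m = {2}"
    by blast
  then show "even m"
    by (metis in_prime_factors_imp_dvd insertI1)
  then have m: "m = 2 * (m div 2)"
    by simp
  have "m div 2 \<noteq> 1"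
    using assms(1) m by linarith
  then obtain r where "prime r" "r dvd m div 2"
    using prime_factor_nat by blast
  then have "r \<in> prime_factors m"
    using assms(1) m by (auto simp: in_prime_factors_iff intro: dvd_mult)
  then show "even (m div 2)"
    using two \<open>r dvd m div 2\<close> by blast
qed

section \<open>Binomial coefficients and harmonic numbers modulo p squared\<close>

lemma binomial_Suc_mult_int:
  assumes "j < n"
  shows "int (n choose Suc j) * int (Suc j) = int (n choose j) * (int n - int j)"
proof -
  have "(n choose Suc j) * Suc j = (n choose j) * (n - j)"
    using binomial_absorption[of j n] binomial_absorb_comp[of n j] by (simp add: mult.commute)
  then have "int (n choose Suc j) * int (Suc j) = int (n choose j) * int (n - j)"
    by (metis of_nat_mult)
  then show ?thesis
    using assms by (simp add: of_nat_diff)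
qed

locale odd_prime =
  fixes p :: nat
  assumes p_prime: "prime p" and p_odd: "odd p"
begin

lemma p_gt_2: "p > 2"
  using p_prime p_odd prime_ge_2_nat[of p] by (cases "p = 2") auto

definition pinv :: "nat \<Rightarrow> int" where
  "pinv i = int i ^ (p - 2)"

definition harm :: "nat \<Rightarrow> int" where
  "harm j = (\<Sum>i = 1..j. pinv i)"

lemma fermat_little: "\<not> p dvd i \<Longrightarrow> [int i ^ (p - 1) = 1] (mod int p)"
  using fermat_theorem[OF p_prime, of i] by (metis cong_int_iff of_nat_1 of_nat_power)

lemma pinv_cong:
  assumes "\<not> p dvd i"
  shows "[int i * pinv i = 1] (mod int p)"
proof -
  have "p - 1 = Suc (p - 2)"
    using p_gt_2 by simp
  then show ?thesis
    using fermat_little[OF assms] by (simp add: pinv_def)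
qed

lemma pinv_mult_mod_cong: "[pinv (i * n mod p) = pinv n * pinv i] (mod int p)"
proof -
  have "[int (i * n mod p) = int n * int i] (mod int p)"
    by (simp add: cong_def zmod_int mult.commute)
  then show ?thesis
    unfolding pinv_def power_mult_distrib[symmetric] by (rule cong_pow)
qed

lemma not_dvd_less: "0 < i \<Longrightarrow> i < p \<Longrightarrow> \<not> p dvd i"
  by (auto dest: dvd_imp_le)

lemma not_dvd_two: "\<not> int p dvd 2"
  using p_gt_2 by (metis int_dvd_int_iff not_dvd_less of_nat_numeral zero_less_numeral)

lemma coprime_square: "\<not> int p dvd a \<Longrightarrow> coprime a ((int p)\<^sup>2)"
  using p_prime prime_imp_coprime[of "int p" a] by (simp add: coprime_commute)

lemma binomial_cong:
  assumes "j \<le> p - 1"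
  shows "[int ((p - 1) choose j) = (-1) ^ j * (1 - int p * harm j)] (mod (int p)\<^sup>2)"
  using assms
proof (induction j)
  case 0
  then show ?case by (simp add: harm_def)
next
  case (Suc j)
  have "j < p - 1"
    using Suc.prems by simp
  then have not_dvd: "\<not> p dvd Suc j"
    by (intro not_dvd_less) auto
  have recurrence: "int ((p - 1) choose Suc j) * int (Suc j) = int ((p - 1) choose j) * (int p - int (Suc j))"
    using binomial_Suc_mult_int[OF \<open>j < p - 1\<close>] p_gt_2 by (simp add: of_nat_diff)
  have inv: "[int p * (int (Suc j) * pinv (Suc j)) = int p] (mod (int p)\<^sup>2)"
    using cong_mult_self_square[OF pinv_cong[OF not_dvd]] by simp
  let ?s = "(-1) ^ Suc j :: int"
  have "[int ((p - 1) choose Suc j) * int (Suc j)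
      = (-1) ^ j * (1 - int p * harm j) * (int p - int (Suc j))] (mod (int p)\<^sup>2)"
    unfolding recurrence using Suc \<open>j < p - 1\<close> by (intro cong_mult cong_refl) simp
  also have "(-1) ^ j * (1 - int p * harm j) * (int p - int (Suc j))
      = ?s * (int (Suc j) - int p * int (Suc j) * harm j - int p) - (-1) ^ j * (int p)\<^sup>2 * harm j"
    by (simp add: algebra_simps power2_eq_square)
  also have "[?s * (int (Suc j) - int p * int (Suc j) * harm j - int p) - (-1) ^ j * (int p)\<^sup>2 * harm j
      = ?s * (int (Suc j) - int p * int (Suc j) * harm j - int p)] (mod (int p)\<^sup>2)"
    by (simp add: cong_iff_dvd_diff)
  also have "[?s * (int (Suc j) - int p * int (Suc j) * harm j - int p)
      = ?s * (int (Suc j) - int p * int (Suc j) * harm j - int p * (int (Suc j) * pinv (Suc j)))] (mod (int p)\<^sup>2)"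
    using inv by (intro cong_scalar_left cong_diff cong_refl) (rule cong_sym)
  also have "?s * (int (Suc j) - int p * int (Suc j) * harm j - int p * (int (Suc j) * pinv (Suc j)))
      = ?s * (1 - int p * harm (Suc j)) * int (Suc j)"
    by (simp add: harm_def algebra_simps)
  finally have "[int ((p - 1) choose Suc j) * int (Suc j) = ?s * (1 - int p * harm (Suc j)) * int (Suc j)] (mod (int p)\<^sup>2)" .
  moreover have "coprime (int (Suc j)) ((int p)\<^sup>2)"
    using not_dvd by (metis coprime_square int_dvd_int_iff)
  ultimately show ?case
    using cong_mult_rcancel by blast
qed

lemma prod_binomial_cong:
  assumes "finite S" "\<forall>k\<in>S. f k \<le> p - 1"
  shows "[(\<Prod>k\<in>S. int ((p - 1) choose f k))
        = (-1) ^ (\<Sum>k\<in>S. f k) * (1 - int p * (\<Sum>k\<in>S. harm (f k)))] (mod (int p)\<^sup>2)"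
proof -
  have "[(\<Prod>k\<in>S. int ((p - 1) choose f k)) = (\<Prod>k\<in>S. (-1) ^ f k * (1 + int p * - harm (f k)))] (mod (int p)\<^sup>2)"
    using assms(2) binomial_cong by (intro cong_prod) simp
  also have "(\<Prod>k\<in>S. (-1) ^ f k * (1 + int p * - harm (f k))) = (-1) ^ (\<Sum>k\<in>S. f k) * (\<Prod>k\<in>S. 1 + int p * - harm (f k))"
    by (simp add: prod.distrib power_sum)
  also have "[\<dots> = (-1) ^ (\<Sum>k\<in>S. f k) * (1 + int p * (\<Sum>k\<in>S. - harm (f k)))] (mod (int p)\<^sup>2)"
    by (intro cong_scalar_left prod_one_plus_mult_cong assms(1))
  finally show ?thesis
    by (simp add: sum_negf)
qed

lemma pinv_reflect_cong:
  assumes "i \<le> p"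
  shows "[pinv (p - i) = - pinv i] (mod int p)"
proof -
  have "[int (p - i) = - int i] (mod int p)"
    using assms by (simp add: cong_iff_dvd_diff of_nat_diff)
  then have "[int (p - i) ^ (p - 2) = (- int i) ^ (p - 2)] (mod int p)"
    by (rule cong_pow)
  moreover have "odd (p - 2)"
    using p_odd p_gt_2 by simp
  ultimately show ?thesis
    by (simp add: pinv_def power_minus_odd)
qed

lemma harm_pred_cong_0: "[harm (p - 1) = 0] (mod int p)"
proof -
  have "harm (p - 1) = (\<Sum>i = 1..p - 1. pinv (p - i))"
    unfolding harm_def by (rule sum.reindex_bij_witness[of _ "\<lambda>i. p - i" "\<lambda>i. p - i"]) auto
  also have "[\<dots> = - harm (p - 1)] (mod int p)"
    unfolding harm_def sum_negf[symmetric] by (intro cong_sum pinv_reflect_cong) auto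
  finally have "int p dvd 2 * harm (p - 1)"
    by (simp add: cong_iff_dvd_diff)
  then show ?thesis
    using p_prime not_dvd_two by (simp add: cong_0_iff prime_dvd_mult_iff)
qed

lemma harm_reflect_cong: "j \<le> p - 1 \<Longrightarrow> [harm (p - 1 - j) = harm j] (mod int p)"
proof (induction j)
  case 0
  then show ?case
    using harm_pred_cong_0 by (simp add: harm_def)
next
  case (Suc j)
  have "p - 1 - j = Suc (p - 1 - Suc j)"
    using Suc.prems by simp
  then have "harm (p - 1 - Suc j) = harm (p - 1 - j) - pinv (p - Suc j)"
    by (simp add: harm_def)
  also have "[harm (p - 1 - j) - pinv (p - Suc j) = harm j - - pinv (Suc j)] (mod int p)"
    using Suc by (intro cong_diff pinv_reflect_cong) auto
  finally show ?case
    by (simp add: harm_def)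
qed

subsection \<open>Lerch's formula\<close>

definition fermat_diff :: "nat \<Rightarrow> int" where
  "fermat_diff n = int n ^ (p - 1) - 1"

lemma residue_quotient_cong:
  assumes "\<not> p dvd a"
  shows "[int a = int (a mod p) * (1 + int p * (int (a div p) * pinv (a mod p)))] (mod (int p)\<^sup>2)"
proof -
  have "\<not> p dvd a mod p"
    using assms by (simp add: dvd_mod_iff)
  then have "[int p * (int (a div p) * 1) = int p * (int (a div p) * (int (a mod p) * pinv (a mod p)))] (mod (int p)\<^sup>2)"
    by (intro cong_mult_self_square cong_scalar_left pinv_cong[THEN cong_sym])
  moreover have "int a = int (a mod p) + int p * (int (a div p) * 1)"
    by (metis mod_mult_div_eq mult_1_right of_nat_add of_nat_mult)
  ultimately show ?thesis
    by (simp add: cong_add_lcancel algebra_simps)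
qed

lemma prod_mult_mod_eq:
  assumes "\<not> p dvd n"
  shows "(\<Prod>i = 1..p - 1. int (i * n mod p)) = (\<Prod>i = 1..p - 1. int i)"
proof -
  let ?r = "\<lambda>i. i * n mod p"
  have "inj_on ?r {1..p - 1}"
  proof (rule inj_onI)
    fix i j
    assume ij: "i \<in> {1..p - 1}" "j \<in> {1..p - 1}" "?r i = ?r j"
    have "coprime n p"
      using assms p_prime prime_imp_coprime coprime_commute by blast
    then have "[i = j] (mod p)"
      using ij(3) cong_mult_rcancel_nat unfolding cong_def by blast
    moreover have "i < p" "j < p"
      using ij p_gt_2 by auto
    ultimately show "i = j"
      by (simp add: cong_def)
  qed
  moreover have "?r ` {1..p - 1} \<subseteq> {1..p - 1}"
  proof
    fix x
    assume "x \<in> ?r ` {1..p - 1}"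
    then obtain i where i: "i \<in> {1..p - 1}" "x = ?r i" ..
    have "\<not> p dvd i"
      using i p_gt_2 by (intro not_dvd_less) auto
    then have "\<not> p dvd i * n"
      using assms p_prime prime_dvd_mult_iff by blast
    then have "x \<noteq> 0"
      using i(2) by (auto simp: dvd_eq_mod_eq_0)
    moreover have "x < p"
      using i(2) p_gt_2 by simp
    ultimately show "x \<in> {1..p - 1}"
      by simp
  qed
  ultimately have "?r ` {1..p - 1} = {1..p - 1}"
    by (simp add: endo_inj_surj)
  then show ?thesis
    using prod.reindex[OF \<open>inj_on ?r {1..p - 1}\<close>, of int] by simp
qed

lemma fermat_power_cong_sum:
  assumes "\<not> p dvd n"
  shows "[int n ^ (p - 1) = 1 + int p * (pinv n * (\<Sum>i = 1..p - 1. int (i * n div p) * pinv i))] (mod (int p)\<^sup>2)"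
proof -
  let ?I = "{1..p - 1}"
  let ?f = "\<Prod>i\<in>?I. int i"
  let ?d = "\<lambda>i. int (i * n div p)" and ?r = "\<lambda>i. i * n mod p"
  have not_dvd: "\<not> p dvd i" if "i \<in> ?I" for i
    using that p_gt_2 by (intro not_dvd_less) auto
  then have not_dvd_mult: "\<not> p dvd i * n" if "i \<in> ?I" for i
    using that assms p_prime prime_dvd_mult_iff by blast
  have "?f * int n ^ (p - 1) = (\<Prod>i\<in>?I. int (i * n))"
    by (simp add: prod.distrib)
  also have "[\<dots> = (\<Prod>i\<in>?I. int (?r i) * (1 + int p * (?d i * pinv (?r i))))] (mod (int p)\<^sup>2)"
    by (rule cong_prod, rule residue_quotient_cong, rule not_dvd_mult)
  also have "(\<Prod>i\<in>?I. int (?r i) * (1 + int p * (?d i * pinv (?r i))))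
      = ?f * (\<Prod>i\<in>?I. 1 + int p * (?d i * pinv (?r i)))"
    using prod_mult_mod_eq[OF assms] by (simp add: prod.distrib)
  also have "[\<dots> = ?f * (1 + int p * (\<Sum>i\<in>?I. ?d i * pinv (?r i)))] (mod (int p)\<^sup>2)"
    by (intro cong_scalar_left prod_one_plus_mult_cong) simp
  also have "[?f * (1 + int p * (\<Sum>i\<in>?I. ?d i * pinv (?r i)))
      = ?f * (1 + int p * (pinv n * (\<Sum>i\<in>?I. ?d i * pinv i)))] (mod (int p)\<^sup>2)"
  proof -
    have "[?d i * pinv (?r i) = ?d i * (pinv n * pinv i)] (mod int p)" for i
      by (intro cong_scalar_left pinv_mult_mod_cong)
    then have "[?d i * pinv (?r i) = pinv n * (?d i * pinv i)] (mod int p)" for i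
      by (simp only: mult.left_commute)
    then have "[(\<Sum>i\<in>?I. ?d i * pinv (?r i)) = pinv n * (\<Sum>i\<in>?I. ?d i * pinv i)] (mod int p)"
      unfolding sum_distrib_left by (rule cong_sum)
    then show ?thesis
      by (intro cong_scalar_left cong_add cong_refl cong_mult_self_square)
  qed
  finally have "[?f * int n ^ (p - 1) = ?f * (1 + int p * (pinv n * (\<Sum>i\<in>?I. ?d i * pinv i)))] (mod (int p)\<^sup>2)" .
  moreover have "\<not> int p dvd ?f"
    using not_dvd p_prime by (subst prime_dvd_prod_iff) auto
  ultimately show ?thesis
    using coprime_square cong_mult_lcancel by blast
qed

lemma lerch_formula:
  assumes "\<not> p dvd n"
  shows "[int p * (\<Sum>i = 1..p - 1. int (i * n div p) * pinv i) = int n * fermat_diff n] (mod (int p)\<^sup>2)"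
proof -
  let ?S = "\<Sum>i = 1..p - 1. int (i * n div p) * pinv i"
  have "[1 * ?S = int n * pinv n * ?S] (mod int p)"
    using pinv_cong[OF assms] by (intro cong_scalar_right) (rule cong_sym)
  then have "[int p * ?S = int p * (int n * pinv n * ?S)] (mod (int p)\<^sup>2)"
    by (intro cong_mult_self_square) simp
  also have "int p * (int n * pinv n * ?S) = int n * (1 + int p * (pinv n * ?S) - 1)"
    by (simp add: algebra_simps)
  also have "[int n * (1 + int p * (pinv n * ?S) - 1) = int n * fermat_diff n] (mod (int p)\<^sup>2)"
    unfolding fermat_diff_def using fermat_power_cong_sum[OF assms]
    by (intro cong_scalar_left cong_diff cong_refl) (rule cong_sym)
  finally show ?thesis .
qed

lemma fermat_diff_dvd: "\<not> p dvd a \<Longrightarrow> int p dvd fermat_diff a"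
  unfolding fermat_diff_def using fermat_little by (simp add: cong_iff_dvd_diff)

lemma fermat_diff_mult:
  assumes "\<not> p dvd a" "\<not> p dvd b"
  shows "[fermat_diff (a * b) = fermat_diff a + fermat_diff b] (mod (int p)\<^sup>2)"
proof -
  have "fermat_diff (a * b) - (fermat_diff a + fermat_diff b) = fermat_diff a * fermat_diff b"
    unfolding fermat_diff_def by (simp add: power_mult_distrib algebra_simps)
  moreover have "(int p)\<^sup>2 dvd fermat_diff a * fermat_diff b"
    using fermat_diff_dvd[OF assms(1)] fermat_diff_dvd[OF assms(2)]
    by (simp add: power2_eq_square mult_dvd_mono)
  ultimately show ?thesis
    by (simp add: cong_iff_dvd_diff)
qed

lemma fermat_diff_prod:
  assumes "finite A" "\<forall>x\<in>A. \<not> p dvd g x"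
  shows "[fermat_diff (\<Prod>x\<in>A. g x) = (\<Sum>x\<in>A. fermat_diff (g x))] (mod (int p)\<^sup>2)"
  using assms
proof (induction A rule: finite_induct)
  case empty
  then show ?case by (simp add: fermat_diff_def)
next
  case (insert a A)
  have "\<not> p dvd (\<Prod>x\<in>A. g x)"
    using insert p_prime by (simp add: prime_dvd_prod_iff)
  then have "[fermat_diff (\<Prod>x\<in>insert a A. g x) = fermat_diff (g a) + fermat_diff (\<Prod>x\<in>A. g x)] (mod (int p)\<^sup>2)"
    using insert fermat_diff_mult by simp
  also have "[fermat_diff (g a) + fermat_diff (\<Prod>x\<in>A. g x) = fermat_diff (g a) + (\<Sum>x\<in>A. fermat_diff (g x))] (mod (int p)\<^sup>2)"
    using insert by (intro cong_add cong_refl) simp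
  finally show ?case
    using insert by simp
qed

lemma fermat_diff_power:
  assumes "\<not> p dvd a"
  shows "[fermat_diff (a ^ k) = int k * fermat_diff a] (mod (int p)\<^sup>2)"
  using fermat_diff_prod[of "{..<k}" "\<lambda>_. a"] assms by simp

lemma harm_floor_sum_cong:
  assumes "n > 0" "\<not> p dvd n"
  shows "[int p * (\<Sum>k\<in>sieved 1 {} n. harm (p * k div n)) = - (int n * fermat_diff n)] (mod (int p)\<^sup>2)"
proof -
  let ?S = "\<Sum>i = 1..p - 1. int (i * n div p) * pinv i"
  have swap: "(\<Sum>k\<in>sieved 1 {} n. harm (p * k div n))
      = (\<Sum>i = 1..p - 1. pinv i * (int (card (sieved 1 {} n)) - int (i * n div p)))"
    unfolding harm_def
  proof (rule sum_sieved_floor_swap)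
    show "\<forall>k\<in>sieved 1 {} n. p * k div n \<le> p - 1"
    proof
      fix k
      assume "k \<in> sieved 1 {} n"
      then have "p * k < p * n"
        using p_gt_2 by (simp add: sieved_def)
      then have "p * k div n < p"
        by (simp add: div_less_iff_less_mult[OF assms(1)] mult.commute)
      then show "p * k div n \<le> p - 1"
        by simp
    qed
    show "\<forall>i\<in>{1..p - 1}. \<not> p dvd i * n \<and> 1 * (i * n div p) < n"
    proof
      fix i
      assume i: "i \<in> {1..p - 1}"
      then have "\<not> p dvd i"
        using p_gt_2 by (intro not_dvd_less) auto
      then have "\<not> p dvd i * n"
        using assms(2) p_prime prime_dvd_mult_iff by blast
      moreover have "i < p"
        using i p_gt_2 by auto
      then have "i * n < n * p"
        using assms(1) by simp
      then have "i * n div p < n"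
        using p_gt_2 by (simp add: div_less_iff_less_mult)
      ultimately show "\<not> p dvd i * n \<and> 1 * (i * n div p) < n"
        by simp
    qed
  qed (use assms p_gt_2 in auto)
  also have "\<dots> = int (card (sieved 1 {} n)) * harm (p - 1) - ?S"
    by (simp add: harm_def algebra_simps sum_subtractf sum_distrib_left)
  also have "[\<dots> = int (card (sieved 1 {} n)) * 0 - ?S] (mod int p)"
    by (intro cong_diff cong_scalar_left harm_pred_cong_0 cong_refl)
  finally have "[int p * (\<Sum>k\<in>sieved 1 {} n. harm (p * k div n)) = int p * - ?S] (mod (int p)\<^sup>2)"
    by (intro cong_mult_self_square) simp
  moreover have "[int p * - ?S = - (int n * fermat_diff n)] (mod (int p)\<^sup>2)"
    using lerch_formula[OF assms(2)] by (simp add: cong_minus_minus_iff)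
  ultimately show ?thesis
    by (rule cong_trans)
qed

subsection \<open>Eisenstein sums\<close>

definition eisenstein :: "nat \<Rightarrow> nat" where
  "eisenstein n = (\<Sum>i = 1..(p - 1) div 2. i * n div p)"

lemma eisenstein_double:
  "eisenstein (2 * x) = 2 * eisenstein x + card {i \<in> {1..(p - 1) div 2}. (p - 1) div 2 < i * x mod p}"
proof -
  define h where "h = (p - 1) div 2"
  have p_eq: "p = 2 * h + 1"
    unfolding h_def using p_odd p_gt_2 by presburger
  have double_div: "i * (2 * x) div p = 2 * (i * x div p) + (if h < i * x mod p then 1 else 0)" for i
  proof -
    define d r where "d = i * x div p" and "r = i * x mod p"
    have "i * x = p * d + r"
      unfolding d_def r_def by simp
    then have "i * (2 * x) = p * (2 * d) + 2 * r"
      by (simp add: algebra_simps)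
    moreover have "r < p"
      using p_gt_2 by (simp add: r_def)
    then have "(p * (2 * d) + 2 * r) div p = 2 * d + (if h < r then 1 else 0)"
      unfolding p_eq by (cases "h < r") (simp_all add: div_nat_eqI algebra_simps)
    ultimately show ?thesis
      by (simp add: d_def r_def)
  qed
  have "eisenstein (2 * x) = (\<Sum>i = 1..h. 2 * (i * x div p) + (if h < i * x mod p then 1 else 0))"
    unfolding eisenstein_def h_def[symmetric] using double_div by simp
  also have "\<dots> = 2 * eisenstein x + card {i \<in> {1..h}. h < i * x mod p}"
    unfolding eisenstein_def h_def[symmetric] by (simp add: sum.distrib sum_distrib_left sum.If_cases Int_def conj_commute)
  finally show ?thesis
    by (simp add: h_def)
qed

lemma eisenstein_sign_double:
  assumes "\<not> p dvd y"
  shows "(-1::int) ^ eisenstein (2 * y) = Legendre (int y) (int p)"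
proof -
  interpret G: GAUSS p "int y"
    using p_prime p_gt_2 assms by unfold_locales (auto simp: cong_0_iff intro!: Nat.gr0I)
  have h: "(int p - 1) div 2 = int ((p - 1) div 2)"
    using p_gt_2 by (simp add: zdiv_int of_nat_diff)
  have "G.A = int ` {1..(p - 1) div 2}"
    unfolding G.A_def h by (simp add: image_int_atLeastAtMost) auto
  then have "{i \<in> G.A. (int p - 1) div 2 < i * int y mod p}
      = int ` {i \<in> {1..(p - 1) div 2}. (p - 1) div 2 < i * y mod p}"
    unfolding h by (auto simp: zmod_int[symmetric] image_iff simp flip: of_nat_mult)
  then have "card G.E = card {i \<in> {1..(p - 1) div 2}. (p - 1) div 2 < i * y mod p}"
    by (simp add: G.card_E_eq card_image)
  then show ?thesis
    by (simp add: G.gauss_lemma eisenstein_double power_add power_mult)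
qed

lemma eisenstein_add_self: "eisenstein (n + p) = eisenstein n + (\<Sum>i = 1..(p - 1) div 2. i)"
proof -
  have "i * (n + p) div p = i * n div p + i" for i
    using p_gt_2 by (simp add: algebra_simps)
  then show ?thesis
    by (simp add: eisenstein_def sum.distrib)
qed

lemma Legendre_mult_nat: "Legendre (int (a * b)) (int p) = Legendre (int a) (int p) * Legendre (int b) (int p)"
  using Legendre_mult[OF p_prime p_gt_2] by simp

lemma Legendre_one: "Legendre 1 (int p) = 1"
  using p_gt_2 by (auto simp: Legendre_def QuadRes_def cong_0_iff intro: exI[of _ 1])

lemma Legendre_mult_self_nat: "\<not> p dvd x \<Longrightarrow> Legendre (int x) (int p) * Legendre (int x) (int p) = 1"
  by (rule Legendre_mult_self) simp

lemma Legendre_two_mult_self: "Legendre 2 (int p) * Legendre 2 (int p) = 1"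
  using not_dvd_two by (rule Legendre_mult_self)

lemma eisenstein_sign_odd_shift:
  assumes "odd x" "\<not> p dvd x"
  shows "(-1::int) ^ eisenstein x * (-1) ^ (\<Sum>i = 1..(p - 1) div 2. i) = Legendre (int ((x + p) div 2)) (int p)"
proof -
  define y where "y = (x + p) div 2"
  have "x + p = 2 * y"
    using assms(1) p_odd by (simp add: y_def)
  moreover have "\<not> p dvd y"
  proof
    assume "p dvd y"
    then have "p dvd x + p"
      unfolding \<open>x + p = 2 * y\<close> by (rule dvd_mult)
    then show False
      using assms(2) by simp
  qed
  ultimately show ?thesis
    unfolding y_def[symmetric] using eisenstein_sign_double eisenstein_add_self by (metis power_add)
qed

lemma Legendre_two: "Legendre 2 (int p) = (-1) ^ (\<Sum>i = 1..(p - 1) div 2. i)"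
proof -
  define y where "y = (1 + p) div 2"
  have "eisenstein 1 = 0"
    unfolding eisenstein_def by (intro sum.neutral ballI div_less) (use p_gt_2 in auto)
  then have shift: "(-1) ^ (\<Sum>i = 1..(p - 1) div 2. i) = Legendre (int y) (int p)"
    using eisenstein_sign_odd_shift[of 1] p_gt_2 unfolding y_def by simp
  have "2 * y = 1 + p"
    using p_odd by (simp add: y_def)
  then have "Legendre 2 (int p) * Legendre (int y) (int p) = Legendre (int (1 + p)) (int p)"
    using Legendre_mult_nat[of 2 y] by simp
  also have "\<dots> = Legendre 1 (int p)"
    by (rule Legendre_cong) (simp add: cong_iff_dvd_diff)
  finally have "Legendre 2 (int p) * Legendre (int y) (int p) = 1"
    by (simp only: Legendre_one)
  then have "Legendre 2 (int p) = Legendre 2 (int p) * Legendre 2 (int p) * Legendre (int y) (int p)"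
    by (simp add: mult.assoc)
  then show ?thesis
    by (simp only: Legendre_two_mult_self shift mult_1_left)
qed

lemma eisenstein_sign_odd:
  assumes "odd x" "\<not> p dvd x"
  shows "(-1::int) ^ eisenstein x = Legendre (int x) (int p)"
proof -
  let ?c = "\<Sum>i = 1..(p - 1) div 2. i"
  have "(-1::int) ^ ?c * (-1) ^ ?c = 1"
    by (simp flip: power_mult_distrib)
  then have "(-1::int) ^ eisenstein x = (-1) ^ eisenstein x * (-1) ^ ?c * (-1) ^ ?c"
    by (simp add: mult.assoc)
  also have "\<dots> = Legendre (int ((x + p) div 2)) (int p) * Legendre 2 (int p)"
    using eisenstein_sign_odd_shift[OF assms] Legendre_two by simp
  also have "\<dots> = Legendre (int (x + p)) (int p)"
    using Legendre_mult_nat[of "(x + p) div 2" 2] assms(1) p_odd by simp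
  also have "\<dots> = Legendre (int x) (int p)"
    by (rule Legendre_cong) (simp add: cong_iff_dvd_diff)
  finally show ?thesis .
qed

lemma eisenstein_sign:
  assumes "\<not> p dvd x"
  shows "(-1::int) ^ eisenstein x = Legendre (int x) (int p) * (if even x then Legendre 2 (int p) else 1)"
proof (cases "even x")
  case True
  then obtain y where "x = 2 * y" ..
  then have "\<not> p dvd y"
    using assms by auto
  have "Legendre (int y) (int p) = Legendre (int x) (int p) * Legendre 2 (int p)"
    using Legendre_mult_nat[of 2 y] Legendre_two_mult_self \<open>x = 2 * y\<close> by (simp add: ac_simps)
  then show ?thesis
    using eisenstein_sign_double[OF \<open>\<not> p dvd y\<close>] \<open>x = 2 * y\<close> True by simp
next
  case False
  then show ?thesis
    using assms eisenstein_sign_odd by simp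
qed

lemma eisenstein_sign_pair_odd:
  assumes "odd q" "\<not> p dvd q" "\<not> p dvd x"
  shows "(-1::int) ^ eisenstein (q * x) * (-1) ^ eisenstein x = Legendre (int q) (int p)"
proof -
  have "\<not> p dvd q * x"
    using assms p_prime prime_dvd_mult_iff by blast
  moreover have "(if even (q * x) then Legendre 2 (int p) else 1) * (if even x then Legendre 2 (int p) else 1) = 1"
    using assms(1) Legendre_two_mult_self by simp
  ultimately show ?thesis
    using eisenstein_sign assms(3) Legendre_mult_nat[of q x] Legendre_mult_self_nat[OF assms(3)]
    by (simp add: ac_simps)
qed

lemma eisenstein_sign_pair_even:
  assumes "even x" "\<not> p dvd x"
  shows "(-1::int) ^ eisenstein (2 * x) * (-1) ^ eisenstein x = Legendre 2 (int p)"
proof -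
  have "\<not> p dvd 2 * x"
    using assms(2) p_prime p_gt_2 prime_dvd_mult_iff by (metis dvd_imp_le not_less zero_less_numeral)
  then show ?thesis
    using eisenstein_sign assms Legendre_mult_nat[of 2 x] Legendre_mult_self_nat[OF assms(2)] Legendre_two_mult_self
    by (simp add: ac_simps)
qed

lemma floor_sum_half_eq:
  assumes "n > 0" "\<not> p dvd n"
  shows "int (\<Sum>k\<in>sieved 2 {} n. p * k div n)
       = int ((p - 1) div 2) * int (card (sieved 2 {} n)) - int (eisenstein n)"
proof -
  define h where "h = (p - 1) div 2"
  have p_eq: "p = 2 * h + 1"
    unfolding h_def using p_odd p_gt_2 by presburger
  have "(\<Sum>k\<in>sieved 2 {} n. \<Sum>i = 1..p * k div n. 1::int)
      = (\<Sum>i = 1..h. 1 * (int (card (sieved 2 {} n)) - int (i * n div p)))"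
  proof (rule sum_sieved_floor_swap)
    show "\<forall>k\<in>sieved 2 {} n. p * k div n \<le> h"
    proof
      fix k
      assume "k \<in> sieved 2 {} n"
      then have "p * (2 * k + 1) \<le> p * n"
        by (intro mult_le_mono2) (simp add: sieved_def)
      then have "p * k < (h + 1) * n"
        unfolding p_eq by (simp add: algebra_simps)
      then show "p * k div n \<le> h"
        using assms(1) by (simp add: div_less_iff_less_mult less_Suc_eq_le[symmetric])
    qed
    show "\<forall>i\<in>{1..h}. \<not> p dvd i * n \<and> 2 * (i * n div p) < n"
    proof
      fix i
      assume i: "i \<in> {1..h}"
      then have "\<not> p dvd i"
        using p_eq by (intro not_dvd_less) auto
      then have "\<not> p dvd i * n"
        using assms(2) p_prime prime_dvd_mult_iff by blast
      have "2 * (i * n div p) * p \<le> 2 * i * n"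
        by simp
      also have "\<dots> \<le> 2 * h * n"
        using i by simp
      also have "\<dots> < n * p"
        unfolding p_eq using assms(1) by simp
      finally have "2 * (i * n div p) < n"
        by simp
      with \<open>\<not> p dvd i * n\<close> show "\<not> p dvd i * n \<and> 2 * (i * n div p) < n"
        by simp
    qed
  qed (use assms p_eq in auto)
  then show ?thesis
    by (simp add: eisenstein_def h_def sum_subtractf)
qed

end

locale coprime_modulus = odd_prime +
  fixes m :: nat
  assumes m_gt_2: "m > 2" and not_dvd_m: "\<not> p dvd m"
begin

lemma not_dvd_cofactor: "D \<subseteq> prime_factors m \<Longrightarrow> \<not> p dvd cofactor m D"
  using cofactor_dvd[of m D] m_gt_2 not_dvd_m dvd_trans by auto

lemma not_dvd_prime_factor: "q \<in> prime_factors m \<Longrightarrow> \<not> p dvd q"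
  using not_dvd_m dvd_trans by blast

lemma fermat_diff_cofactor:
  assumes "D \<subseteq> prime_factors m"
  shows "[fermat_diff (cofactor m D)
        = (\<Sum>q\<in>prime_factors m. (int (multiplicity q m) - (if q \<in> D then 1 else 0)) * fermat_diff q)] (mod (int p)\<^sup>2)"
proof -
  let ?\<alpha> = "\<lambda>q. int (multiplicity q m)" and ?U = "\<lambda>q. fermat_diff q"
  have "finite D"
    using assms finite_subset by blast
  have "\<forall>q\<in>prime_factors m. \<not> p dvd q ^ multiplicity q m"
    using not_dvd_prime_factor p_prime prime_dvd_power by blast
  then have "[fermat_diff (\<Prod>q\<in>prime_factors m. q ^ multiplicity q m)
      = (\<Sum>q\<in>prime_factors m. fermat_diff (q ^ multiplicity q m))] (mod (int p)\<^sup>2)"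
    by (intro fermat_diff_prod) simp_all
  also have "(\<Prod>q\<in>prime_factors m. q ^ multiplicity q m) = m"
    using prod_prime_factors[of m] m_gt_2 by simp
  also have "[(\<Sum>q\<in>prime_factors m. fermat_diff (q ^ multiplicity q m))
      = (\<Sum>q\<in>prime_factors m. ?\<alpha> q * ?U q)] (mod (int p)\<^sup>2)"
    by (intro cong_sum fermat_diff_power not_dvd_prime_factor)
  finally have m: "[?U m = (\<Sum>q\<in>prime_factors m. ?\<alpha> q * ?U q)] (mod (int p)\<^sup>2)" .
  have "[fermat_diff (\<Prod>q\<in>D. q) = (\<Sum>q\<in>D. ?U q)] (mod (int p)\<^sup>2)"
    using assms not_dvd_prime_factor by (intro fermat_diff_prod \<open>finite D\<close>) auto
  also have "(\<Sum>q\<in>D. ?U q) = (\<Sum>q\<in>prime_factors m \<inter> D. ?U q)"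
    using assms by (simp add: Int_absorb1)
  also have "\<dots> = (\<Sum>q\<in>prime_factors m. (if q \<in> D then 1 else 0) * ?U q)"
    by (simp add: sum.inter_restrict if_distrib[of "\<lambda>x. x * _"] cong: if_cong)
  finally have D: "[?U (\<Prod>D) = (\<Sum>q\<in>prime_factors m. (if q \<in> D then 1 else 0) * ?U q)] (mod (int p)\<^sup>2)"
    by simp
  have "\<not> p dvd \<Prod>D"
    using prod_dvd_of_subset_prime_factors[OF _ assms] m_gt_2 not_dvd_m dvd_trans by auto
  then have "[?U (cofactor m D * \<Prod>D) = ?U (cofactor m D) + ?U (\<Prod>D)] (mod (int p)\<^sup>2)"
    using fermat_diff_mult not_dvd_cofactor[OF assms] by blast
  then have "[?U m - ?U (\<Prod>D) = ?U (cofactor m D)] (mod (int p)\<^sup>2)"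
    using cofactor_mult[OF _ assms] m_gt_2 cong_diff[OF _ cong_refl[of "?U (\<Prod>D)"]] by fastforce
  then have "[?U (cofactor m D) = ?U m - ?U (\<Prod>D)] (mod (int p)\<^sup>2)"
    by (rule cong_sym)
  also have "[?U m - ?U (\<Prod>D) = (\<Sum>q\<in>prime_factors m. ?\<alpha> q * ?U q)
      - (\<Sum>q\<in>prime_factors m. (if q \<in> D then 1 else 0) * ?U q)] (mod (int p)\<^sup>2)"
    by (rule cong_diff[OF m D])
  finally show ?thesis
    by (simp add: sum_subtractf left_diff_distrib)
qed

lemma harm_sum_coprime_cong:
  "[int p * (\<Sum>k | 0 < k \<and> k < m \<and> coprime k m. harm (p * k div m))
    = - (\<Sum>D\<in>Pow (prime_factors m). (-1) ^ card D * (int (cofactor m D) * fermat_diff (cofactor m D)))] (mod (int p)\<^sup>2)"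
proof -
  have "(\<Sum>k | 0 < k \<and> 1 * k < m \<and> coprime k m. harm (p * k div m))
      = (\<Sum>D\<in>Pow (prime_factors m). (-1) ^ card D * (\<Sum>k\<in>sieved 1 {} (cofactor m D). harm (p * k div cofactor m D)))"
    using m_gt_2 by (intro sum_coprime_inclusion_exclusion) (simp_all add: mult.left_commute)
  then have "int p * (\<Sum>k | 0 < k \<and> k < m \<and> coprime k m. harm (p * k div m))
      = (\<Sum>D\<in>Pow (prime_factors m). (-1) ^ card D * (int p * (\<Sum>k\<in>sieved 1 {} (cofactor m D). harm (p * k div cofactor m D))))"
    by (simp add: sum_distrib_left mult.left_commute)
  also have "[\<dots> = (\<Sum>D\<in>Pow (prime_factors m). (-1) ^ card D * - (int (cofactor m D) * fermat_diff (cofactor m D)))] (mod (int p)\<^sup>2)"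
    using m_gt_2 cofactor_pos not_dvd_cofactor
    by (intro cong_sum cong_scalar_left harm_floor_sum_cong) auto
  finally show ?thesis
    by (simp add: sum_negf)
qed

lemma fermat_diff_eq_mult_quotient: "fermat_diff q = (int q - 1) * ((int q ^ (p - 1) - 1) div (int q - 1))"
proof -
  have "[int q ^ (p - 1) = 1 ^ (p - 1)] (mod (int q - 1))"
    by (intro cong_pow) (simp add: cong_iff_dvd_diff)
  then show ?thesis
    by (simp add: fermat_diff_def cong_iff_dvd_diff)
qed

lemma alternating_cofactor_fermat_diff_cong:
  "[(\<Sum>D\<in>Pow (prime_factors m). (-1) ^ card D * (int (cofactor m D) * fermat_diff (cofactor m D)))
    = int (totient m) * (\<Sum>q\<in>prime_factors m.
        (int (multiplicity q m) * int q - int (multiplicity q m) + 1)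
        * ((int q ^ (p - 1) - 1) div (int q - 1)))] (mod (int p)\<^sup>2)"
proof -
  let ?\<alpha> = "\<lambda>q. int (multiplicity q m)" and ?\<delta> = "\<lambda>q D. if q \<in> D then 1 else 0"
  let ?w = "\<lambda>q. \<Sum>D\<in>Pow (prime_factors m). (-1) ^ card D * int (cofactor m D) * (?\<alpha> q - ?\<delta> q D)"
  have "[(\<Sum>D\<in>Pow (prime_factors m). (-1) ^ card D * (int (cofactor m D) * fermat_diff (cofactor m D)))
      = (\<Sum>D\<in>Pow (prime_factors m). (-1) ^ card D * (int (cofactor m D)
          * (\<Sum>q\<in>prime_factors m. (?\<alpha> q - ?\<delta> q D) * fermat_diff q)))] (mod (int p)\<^sup>2)"
    by (intro cong_sum cong_scalar_left fermat_diff_cofactor) simp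
  also have "(\<Sum>D\<in>Pow (prime_factors m). (-1) ^ card D * (int (cofactor m D)
          * (\<Sum>q\<in>prime_factors m. (?\<alpha> q - ?\<delta> q D) * fermat_diff q)))
      = (\<Sum>q\<in>prime_factors m. ?w q * fermat_diff q)"
    by (simp add: sum_distrib_left sum_distrib_right sum.swap[of _ "Pow _"] ac_simps)
  also have "\<dots> = (\<Sum>q\<in>prime_factors m. ?w q * (int q - 1) * ((int q ^ (p - 1) - 1) div (int q - 1)))"
    by (simp add: fermat_diff_eq_mult_quotient mult.assoc)
  also have "\<dots> = int (totient m) * (\<Sum>q\<in>prime_factors m.
        (?\<alpha> q * int q - ?\<alpha> q + 1) * ((int q ^ (p - 1) - 1) div (int q - 1)))"
    using totient_multiplicity_sum m_gt_2 by (simp add: sum_distrib_left ac_simps)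
  finally show ?thesis .
qed

lemma harm_sum_fold_cong:
  "[(\<Sum>k | 0 < k \<and> k < m \<and> coprime k m. harm (p * k div m))
    = 2 * (\<Sum>k | 0 < k \<and> 2 * k < m \<and> coprime k m. harm (p * k div m))] (mod int p)"
proof -
  let ?j = "\<lambda>k. p * k div m"
  have reflect: "[harm (?j (m - k)) = harm (?j k)] (mod int p)" if "0 < k" "2 * k < m" "coprime k m" for k
  proof -
    have "coprime (p * k) m"
      using that(3) not_dvd_m p_prime by (simp add: prime_imp_coprime)
    then have "\<not> m dvd p * k"
      using coprime_common_divisor_nat[of "p * k" m m] m_gt_2 by auto
    moreover have "?j k < p"
      using that(2) p_gt_2 by (simp add: div_less_iff_less_mult)
    ultimately show ?thesis
      using floor_mult_complement[of k m] harm_reflect_cong[of "?j k"] that(2) by simp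
  qed
  have "[(\<Sum>k | 0 < k \<and> 2 * k < m \<and> coprime k m. harm (?j k) + harm (?j (m - k)))
      = (\<Sum>k | 0 < k \<and> 2 * k < m \<and> coprime k m. harm (?j k) + harm (?j k))] (mod int p)"
  proof (intro cong_sum cong_add cong_refl)
    fix k
    assume "k \<in> {k. 0 < k \<and> 2 * k < m \<and> coprime k m}"
    then show "[harm (?j (m - k)) = harm (?j k)] (mod int p)"
      by (intro reflect) simp_all
  qed
  then show ?thesis
    by (simp only: sum_coprime_fold_half[OF m_gt_2] sum.distrib mult_2)
qed

lemma harm_sum_half_cong:
  "[int p * (\<Sum>k | 0 < k \<and> 2 * k < m \<and> coprime k m. harm (p * k div m))
    = - (int (totient m div 2) * (\<Sum>q\<in>prime_factors m.
        (int (multiplicity q m) * int q - int (multiplicity q m) + 1)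
        * ((int q ^ (p - 1) - 1) div (int q - 1))))] (mod (int p)\<^sup>2)"
proof -
  let ?H = "\<Sum>k | 0 < k \<and> 2 * k < m \<and> coprime k m. harm (p * k div m)"
  let ?C = "\<Sum>q\<in>prime_factors m. (int (multiplicity q m) * int q - int (multiplicity q m) + 1)
        * ((int q ^ (p - 1) - 1) div (int q - 1))"
  have "[int p * (\<Sum>k | 0 < k \<and> k < m \<and> coprime k m. harm (p * k div m)) = int p * (2 * ?H)] (mod (int p)\<^sup>2)"
    using harm_sum_fold_cong by (rule cong_mult_self_square)
  moreover have "[int p * (\<Sum>k | 0 < k \<and> k < m \<and> coprime k m. harm (p * k div m)) = - (int (totient m) * ?C)] (mod (int p)\<^sup>2)"
    using harm_sum_coprime_cong cong_minus_minus_iff[THEN iffD2, OF alternating_cofactor_fermat_diff_cong]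
    by (rule cong_trans)
  ultimately have "[int p * (2 * ?H) = - (int (totient m) * ?C)] (mod (int p)\<^sup>2)"
    using cong_sym cong_trans by blast
  moreover have "2 * (totient m div 2) = totient m"
    using totient_even[OF m_gt_2] by (rule even_two_times_div_two)
  then have "int (totient m) = 2 * int (totient m div 2)"
    by (metis of_nat_mult of_nat_numeral)
  ultimately have "[(int p * ?H) * 2 = (- (int (totient m div 2) * ?C)) * 2] (mod (int p)\<^sup>2)"
    by (simp add: algebra_simps)
  moreover have "coprime 2 ((int p)\<^sup>2)"
    using not_dvd_two by (intro coprime_square)
  ultimately show ?thesis
    using cong_mult_rcancel by blast
qed

lemma prod_eisenstein_sign_cofactor_odd:
  assumes "q \<in> prime_factors m" "odd q"
  shows "(\<Prod>D\<in>Pow (prime_factors m). (-1::int) ^ eisenstein (cofactor m D))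
       = Legendre (int q) (int p) ^ 2 ^ card (prime_factors m - {q})"
proof -
  let ?P = "prime_factors m - {q}"
  have P: "prime_factors m = insert q ?P" "finite ?P" "q \<notin> ?P"
    using assms(1) by auto
  have "(\<Prod>D\<in>Pow (prime_factors m). (-1::int) ^ eisenstein (cofactor m D))
      = (\<Prod>D\<in>Pow ?P. (-1) ^ eisenstein (cofactor m D) * (-1) ^ eisenstein (cofactor m (insert q D)))"
    by (subst P(1)) (rule prod_Pow_insert[OF P(2,3)])
  also have "\<dots> = (\<Prod>D\<in>Pow ?P. Legendre (int q) (int p))"
  proof (rule prod.cong)
    fix D
    assume "D \<in> Pow ?P"
    then have "cofactor m D = q * cofactor m (insert q D)" "insert q D \<subseteq> prime_factors m"
      using cofactor_insert[OF _ assms(1), of D] m_gt_2 assms(1) by auto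
    then show "(-1) ^ eisenstein (cofactor m D) * (-1) ^ eisenstein (cofactor m (insert q D)) = Legendre (int q) (int p)"
      using eisenstein_sign_pair_odd[OF assms(2) not_dvd_prime_factor[OF assms(1)] not_dvd_cofactor] by simp
  qed simp
  finally show ?thesis
    using P(2) by (simp add: card_Pow)
qed

lemma prod_eisenstein_sign_cofactor:
  "(\<Prod>D\<in>Pow (prime_factors m). (-1::int) ^ eisenstein (cofactor m D))
   = (if card (prime_factors m) = 1 then Legendre (int (the_elem (prime_factors m))) (int p) else 1)"
proof (cases "\<exists>q\<in>prime_factors m. odd q")
  case True
  then obtain q where q: "q \<in> prime_factors m" "odd q"
    by blast
  let ?P = "prime_factors m - {q}"
  show ?thesis
  proof (cases "?P = {}")
    case True
    then have "prime_factors m = {q}"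
      using q(1) by blast
    then show ?thesis
      using prod_eisenstein_sign_cofactor_odd[OF q] by simp
  next
    case False
    then have "card ?P > 0"
      by (simp add: card_gt_0_iff)
    moreover have "card (prime_factors m) = Suc (card ?P)"
      using q(1) by (metis card_Suc_Diff1 finite_set_mset)
    ultimately have "card ?P = Suc (card ?P - 1)" "card (prime_factors m) \<noteq> 1"
      by linarith+
    then show ?thesis
      using prod_eisenstein_sign_cofactor_odd[OF q] Legendre_mult_self_nat[OF not_dvd_prime_factor[OF q(1)]]
      by (metis power_Suc power_mult power2_eq_square power_one)
  qed
next
  case False
  then have P: "prime_factors m = {2}" and "even m" and "even (m div 2)"
    using prime_factors_eq_two[OF m_gt_2] by auto
  then have "m = 2 * (m div 2)"
    by simp
  moreover have "\<not> p dvd m div 2"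
    using not_dvd_m \<open>m = 2 * (m div 2)\<close> by (metis dvd_mult)
  ultimately have "(-1::int) ^ eisenstein m * (-1) ^ eisenstein (m div 2) = Legendre 2 (int p)"
    using eisenstein_sign_pair_even \<open>even (m div 2)\<close> by metis
  moreover have "(\<Prod>D\<in>Pow {2}. (-1::int) ^ eisenstein (cofactor m D))
      = (-1) ^ eisenstein (cofactor m {}) * (-1) ^ eisenstein (cofactor m {2})"
    using prod_Pow_insert[of "{}" 2] by simp
  ultimately show ?thesis
    using P by (simp add: cofactor_def)
qed

lemma floor_sum_coprime_half:
  "int (\<Sum>k | 0 < k \<and> 2 * k < m \<and> coprime k m. p * k div m)
   = int ((p - 1) div 2) * int (totient m div 2)
     - (\<Sum>D\<in>Pow (prime_factors m). (-1) ^ card D * int (eisenstein (cofactor m D)))"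
proof -
  let ?S = "\<lambda>D. sieved 2 {} (cofactor m D)"
  have "int (\<Sum>k | 0 < k \<and> 2 * k < m \<and> coprime k m. p * k div m)
      = (\<Sum>k | 0 < k \<and> 2 * k < m \<and> coprime k m. int (p * k div m))"
    by simp
  also have "\<dots> = (\<Sum>D\<in>Pow (prime_factors m). (-1) ^ card D * (\<Sum>k\<in>?S D. int (p * k div cofactor m D)))"
    using m_gt_2 by (intro sum_coprime_inclusion_exclusion) (simp_all add: mult.left_commute)
  also have "\<dots> = (\<Sum>D\<in>Pow (prime_factors m). int ((p - 1) div 2) * ((-1) ^ card D * int (card (?S D)))
      - (-1) ^ card D * int (eisenstein (cofactor m D)))"
  proof (rule sum.cong)
    fix D
    assume "D \<in> Pow (prime_factors m)"
    then have "cofactor m D > 0" "\<not> p dvd cofactor m D"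
      using cofactor_pos not_dvd_cofactor m_gt_2 by auto
    then have "(\<Sum>k\<in>?S D. int (p * k div cofactor m D))
        = int ((p - 1) div 2) * int (card (?S D)) - int (eisenstein (cofactor m D))"
      using floor_sum_half_eq by simp
    then show "(-1) ^ card D * (\<Sum>k\<in>?S D. int (p * k div cofactor m D))
        = int ((p - 1) div 2) * ((-1) ^ card D * int (card (?S D))) - (-1) ^ card D * int (eisenstein (cofactor m D))"
      unfolding \<open>(\<Sum>k\<in>?S D. int (p * k div cofactor m D)) = _\<close> by (simp add: algebra_simps)
  qed simp
  also have "\<dots> = int ((p - 1) div 2) * (\<Sum>D\<in>Pow (prime_factors m). (-1) ^ card D * int (card (?S D)))
      - (\<Sum>D\<in>Pow (prime_factors m). (-1) ^ card D * int (eisenstein (cofactor m D)))"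
    by (simp add: sum_subtractf sum_distrib_left)
  also have "(\<Sum>D\<in>Pow (prime_factors m). (-1) ^ card D * int (card (?S D))) = int (totient m div 2)"
    using sum_coprime_inclusion_exclusion[of 2 m "\<lambda>_ _. 1::int"] card_coprime_below_half[OF m_gt_2] m_gt_2
    by simp
  finally show ?thesis .
qed

lemma sign_factor_cancels:
  "(-1::int) ^ (totient m div 2 * ((p - 1) div 2))
   * (if card (prime_factors m) = 1 then Legendre (int (the_elem (prime_factors m))) (int p) else 1)
   * (-1) ^ (\<Sum>k | 0 < k \<and> 2 * k < m \<and> coprime k m. p * k div m) = 1"
proof -
  let ?J = "\<Sum>k | 0 < k \<and> 2 * k < m \<and> coprime k m. p * k div m"
  let ?T = "\<Sum>D\<in>Pow (prime_factors m). eisenstein (cofactor m D)"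
  let ?N = "totient m div 2 * ((p - 1) div 2)"
  have "int ?J + int ?T = int ?N + (\<Sum>D\<in>Pow (prime_factors m). (1 - (-1) ^ card D) * int (eisenstein (cofactor m D)))"
    using floor_sum_coprime_half by (simp add: algebra_simps sum_subtractf sum.distrib)
  moreover have "even (\<Sum>D\<in>Pow (prime_factors m). (1 - (-1) ^ card D) * int (eisenstein (cofactor m D)))"
  proof (rule dvd_sum)
    fix D
    show "even ((1 - (-1::int) ^ card D) * int (eisenstein (cofactor m D)))"
      by (cases "even (card D)") simp_all
  qed
  ultimately have "even (int ?J + int ?T) \<longleftrightarrow> even (int ?N)"
    by simp
  then have "even (?J + ?T) \<longleftrightarrow> even ?N"
    by (simp only: of_nat_add[symmetric] even_of_nat)
  then have "(-1::int) ^ (?J + ?T) = (-1) ^ ?N"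
    by (rule minus_one_power_eq)
  then have parity: "(-1::int) ^ ?J * (-1) ^ ?T = (-1) ^ ?N"
    by (simp only: power_add)
  moreover have "(-1::int) ^ ?T = (if card (prime_factors m) = 1 then Legendre (int (the_elem (prime_factors m))) (int p) else 1)"
    unfolding power_sum by (rule prod_eisenstein_sign_cofactor)
  ultimately have "(-1::int) ^ ?N * (if card (prime_factors m) = 1 then Legendre (int (the_elem (prime_factors m))) (int p) else 1)
      * (-1) ^ ?J = ((-1) ^ ?J * (-1) ^ ?J) * ((-1) ^ ?T * (-1) ^ ?T)"
    by (simp only: ac_simps)
  also have "\<dots> = 1"
    by (simp flip: power_mult_distrib)
  finally show ?thesis .
qed

end

theorem theorem1p2:
  fixes m p :: nat
  assumes "m > 2" and "prime p" and "odd p" and "\<not> p dvd m"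
  shows "[(-1::int) ^ (totient m div 2 * ((p - 1) div 2))
          * (if card (prime_factors m) = 1
             then Legendre (int (the_elem (prime_factors m))) (int p) else 1)
          * (\<Prod>k\<in>{k. 0 < k \<and> 2 * k < m \<and> coprime k m}. int ((p - 1) choose (p * k div m)))
        = 1 + int (totient m div 2)
              * (\<Sum>q\<in>prime_factors m.
                   (int (multiplicity q m) * int q - int (multiplicity q m) + 1)
                   * ((int q ^ (p - 1) - 1) div (int q - 1)))] (mod (int p ^ 2))"
proof -
  interpret coprime_modulus p m
    using assms by unfold_locales auto
  let ?S = "{k. 0 < k \<and> 2 * k < m \<and> coprime k m}"
  let ?sign = "(-1::int) ^ (totient m div 2 * ((p - 1) div 2))
    * (if card (prime_factors m) = 1 then Legendre (int (the_elem (prime_factors m))) (int p) else 1)"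
  let ?C = "\<Sum>q\<in>prime_factors m. (int (multiplicity q m) * int q - int (multiplicity q m) + 1)
    * ((int q ^ (p - 1) - 1) div (int q - 1))"
  let ?H = "\<Sum>k\<in>?S. harm (p * k div m)"
  have "finite ?S"
    by (rule finite_subset[of _ "{..<m}"]) auto
  moreover have "\<forall>k\<in>?S. p * k div m \<le> p - 1"
    using p_gt_2 by (auto simp: less_Suc_eq_le[symmetric] div_less_iff_less_mult)
  ultimately have "[?sign * (\<Prod>k\<in>?S. int ((p - 1) choose (p * k div m)))
      = ?sign * ((-1) ^ (\<Sum>k\<in>?S. p * k div m) * (1 - int p * ?H))] (mod (int p)\<^sup>2)"
    by (intro cong_scalar_left prod_binomial_cong)
  also have "?sign * ((-1) ^ (\<Sum>k\<in>?S. p * k div m) * (1 - int p * ?H)) = 1 - int p * ?H"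
    using sign_factor_cancels by (simp add: mult.assoc)
  also have "[1 - int p * ?H = 1 - - (int (totient m div 2) * ?C)] (mod (int p)\<^sup>2)"
    by (intro cong_diff cong_refl harm_sum_half_cong)
  finally show ?thesis
    by simp
qed

end
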